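(* Let $\mathfrak{R}$ be an alternative ring with a nontrivial idempotent $e_1$ and Peirce decomposition $\mathfrak{R}=\mathfrak{R}_{11}\oplus\mathfrak{R}_{12}\oplus\mathfrak{R}_{21}\oplus\mathfrak{R}_{22}$, satisfying: (i) if $a_{11}\in\mathfrak{R}_{11}$, $a_{22}\in\mathfrak{R}_{22}$ and $[a_{11}+a_{22},\mathfrak{R}_{12}]=0$, then $a_{11}+a_{22}\in\mathcal{Z}(\mathfrak{R})$; (ii) if $a_{11}\in\mathfrak{R}_{11}$, $a_{22}\in\mathfrak{R}_{22}$ and $[a_{11}+a_{22},\mathfrak{R}_{21}]=0$, then $a_{11}+a_{22}\in\mathcal{Z}(\mathfrak{R})$. Let $\mathcal{D}$ be a multiplicative Lie-type derivation of $\mathfrak{R}$. Then for any $i\neq j$ and any $a_{ij},b_{ij}\in\mathfrak{R}_{ij}$, $\mathcal{D}(a_{ij}+b_{ij})=\mathcal{D}(a_{ij})+\mathcal{D}(b_{ij})$.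
   Context: Rings are not assumed associative or unital. The associator is $(x,y,z)=(xy)z-x(yz)$; $\mathfrak{R}$ is alternative if $(x,x,y)=0=(y,x,x)$ for all $x,y$. $[x,y]=xy-yx$ and $\mathcal{Z}(\mathfrak{R})=\{r: [r,x]=0\ \forall x\in\mathfrak{R}\}$. Define $p_1(x)=x$, $p_n(x_1,\dots,x_n)=[p_{n-1}(x_1,\dots,x_{n-1}),x_n]$. For $n\ge2$, a (not necessarily additive) map $\mathcal{D}\colon\mathfrak{R}\to\mathfrak{R}$ is a multiplicative Lie $n$-derivation if $\mathcal{D}(p_n(x_1,\dots,x_n))=\sum_{i=1}^n p_n(x_1,\dots,\mathcal{D}(x_i),\dots,x_n)$ for all $x_i\in\mathfrak{R}$; a multiplicative Lie-type derivation is a multiplicative Lie $n$-derivation for some $n\ge2$. A nontrivial idempotent is $e_1\ne0$ with $e_1^2=e_1$ which is not a multiplicative identity. With $e_2a:=a-e_1a$, $ae_2:=a-ae_1$, set $\mathfrak{R}_{ij}=e_i\mathfrak{R}e_j$ ($i,j=1,2$), so $\mathfrak{R}=\bigoplus_{i,j}\mathfrak{R}_{ij}$. *)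

theory Defs
  imports Main
begin

class nonassoc_ring = ab_group_add + times +
  assumes na_distrib_left: "a * (b + c) = a * b + a * c"
    and na_distrib_right: "(a + b) * c = a * c + b * c"

definition associator :: "'a::nonassoc_ring \<Rightarrow> 'a \<Rightarrow> 'a \<Rightarrow> 'a" where
  "associator x y z = (x * y) * z - x * (y * z)"

class alternative_ring = nonassoc_ring +
  assumes left_alternative: "(x * x) * y - x * (x * y) = 0"
    and right_alternative: "(y * x) * x - y * (x * x) = 0"

definition commutator :: "'a::nonassoc_ring \<Rightarrow> 'a \<Rightarrow> 'a" where
  "commutator x y = x * y - y * x"

definition center :: "'a::nonassoc_ring set" where
  "center = {r. \<forall>x. commutator r x = 0}"

text \<open>p_1(x) = x, p_n(x_1,...,x_n) = [p_{n-1}(x_1,...,x_{n-1}), x_n], on a nonempty list.\<close>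
definition lie_poly :: "'a::nonassoc_ring list \<Rightarrow> 'a" where
  "lie_poly xs = foldl commutator (hd xs) (tl xs)"

definition mult_lie_n_derivation :: "nat \<Rightarrow> ('a::nonassoc_ring \<Rightarrow> 'a) \<Rightarrow> bool" where
  "mult_lie_n_derivation n D \<longleftrightarrow>
     (\<forall>xs. length xs = n \<longrightarrow>
        D (lie_poly xs) = (\<Sum>i<n. lie_poly (xs[i := D (xs ! i)])))"

definition mult_lie_type_derivation :: "('a::nonassoc_ring \<Rightarrow> 'a) \<Rightarrow> bool" where
  "mult_lie_type_derivation D \<longleftrightarrow> (\<exists>n\<ge>2. mult_lie_n_derivation n D)"

definition nontrivial_idempotent :: "'a::nonassoc_ring \<Rightarrow> bool" where
  "nontrivial_idempotent e \<longleftrightarrow> e \<noteq> 0 \<and> e * e = e \<and> \<not> (\<forall>x. e * x = x \<and> x * e = x)"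

text \<open>e_1 a = e*a, e_2 a = a - e*a; a e_1 = a*e, a e_2 = a - a*e.\<close>
definition peirce_left :: "nat \<Rightarrow> 'a::nonassoc_ring \<Rightarrow> 'a \<Rightarrow> 'a" where
  "peirce_left i e a = (if i = 1 then e * a else a - e * a)"

definition peirce_right :: "nat \<Rightarrow> 'a::nonassoc_ring \<Rightarrow> 'a \<Rightarrow> 'a" where
  "peirce_right j e a = (if j = 1 then a * e else a - a * e)"

text \<open>R_ij = e_i R e_j, read as (e_i x) e_j (equal to e_i (x e_j) in alternative rings).\<close>
definition peirce :: "'a::nonassoc_ring \<Rightarrow> nat \<Rightarrow> nat \<Rightarrow> 'a set" where
  "peirce e i j = {peirce_right j e (peirce_left i e x) | x. True}"

end

theory Submission
  imports Defs
begin

text \<open>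
Fix n \<ge> 3 (a Lie 2-derivation is also a Lie 3-derivation), put k = n - 2 and write
ad^k w = [...[w, e], ..., e] with k copies of the idempotent e. Applied to [u, v, e, ..., e],
the defining identity shows that the additivity defect \<delta>(u, v) = D(u + v) - D u - D v
satisfies ad^k [\<delta>(u, v), w] = \<delta>(ad^k [u, w], ad^k [v, w]). On the Peirce spaces, ad^k acts
as (-1)^k on R12, as the identity on R21 and as zero on R11 + R22. Hence for off-diagonal w
the defect \<delta>(e, w) is Peirce diagonal and commutes with the opposite off-diagonal space, so
it is central by (i) or (ii). Central defects drop out of the expansion of D(ad^k [e + u, e + v]);
choosing u, v off-diagonal gives additivity first on R12 + R21 and then on R12 and on R21,
where the cross term [u, v] lands in the opposite off-diagonal space.
\<close>

section \<open>Non-associative and alternative rings\<close>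

lemma na_mult_zero_left [simp]: "0 * (a::'a::nonassoc_ring) = 0"
  using na_distrib_right [of 0 0 a] by simp

lemma na_mult_zero_right [simp]: "(a::'a::nonassoc_ring) * 0 = 0"
  using na_distrib_left [of a 0 0] by simp

lemma na_minus_mult_left: "(- a) * (b::'a::nonassoc_ring) = - (a * b)"
  using na_distrib_right [of "- a" a b] by (simp add: eq_neg_iff_add_eq_0 add.commute)

lemma na_minus_mult_right: "(a::'a::nonassoc_ring) * (- b) = - (a * b)"
  using na_distrib_left [of a "- b" b] by (simp add: eq_neg_iff_add_eq_0 add.commute)

lemma na_diff_mult: "(a - b) * (c::'a::nonassoc_ring) = a * c - b * c"
  using na_distrib_right [of a "- b" c] by (simp add: na_minus_mult_left)

lemma na_mult_diff: "(c::'a::nonassoc_ring) * (a - b) = c * a - c * b"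
  using na_distrib_left [of c a "- b"] by (simp add: na_minus_mult_right)

lemmas na_simps = na_distrib_left na_distrib_right
  na_minus_mult_left na_minus_mult_right na_diff_mult na_mult_diff

lemma commutator_add_left:
  "commutator (u + v) (x::'a::nonassoc_ring) = commutator u x + commutator v x"
  unfolding commutator_def by (simp add: na_simps algebra_simps)

lemma commutator_add_right:
  "commutator (x::'a::nonassoc_ring) (u + v) = commutator x u + commutator x v"
  unfolding commutator_def by (simp add: na_simps algebra_simps)

lemma commutator_diff_left:
  "commutator (u - v) (x::'a::nonassoc_ring) = commutator u x - commutator v x"
  unfolding commutator_def by (simp add: na_simps algebra_simps)

lemmas commutator_linear = commutator_add_left commutator_add_right commutator_diff_left

lemma commutator_zero_left [simp]: "commutator 0 (x::'a::nonassoc_ring) = 0"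
  unfolding commutator_def by simp

lemma commutator_zero_right [simp]: "commutator (x::'a::nonassoc_ring) 0 = 0"
  unfolding commutator_def by simp

lemma commutator_self [simp]: "commutator (x::'a::nonassoc_ring) x = 0"
  unfolding commutator_def by simp

lemma commutator_swap: "commutator x (y::'a::nonassoc_ring) = - commutator y x"
  unfolding commutator_def by simp

lemma center_commutator_left: "z \<in> center \<Longrightarrow> commutator z w = 0"
  unfolding center_def by blast

lemma center_commutator_right: "z \<in> center \<Longrightarrow> commutator w z = (0::'a::nonassoc_ring)"
  using center_commutator_left [of z w] commutator_swap [of w z] by simp

lemma associator_add_left:
  "associator (x + y) z (w::'a::nonassoc_ring) = associator x z w + associator y z w"
  unfolding associator_def by (simp add: na_simps algebra_simps)

lemma associator_add_middle:
  "associator z (x + y) (w::'a::nonassoc_ring) = associator z x w + associator z y w"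
  unfolding associator_def by (simp add: na_simps algebra_simps)

lemma associator_add_right:
  "associator z w (x + y::'a::nonassoc_ring) = associator z w x + associator z w y"
  unfolding associator_def by (simp add: na_simps algebra_simps)

lemmas associator_add = associator_add_left associator_add_middle associator_add_right

lemma teichmuller_identity:
  "associator (w * x) y z - associator w (x * y) z + associator w x (y * z)
     = w * associator x y z + associator w x y * (z::'a::nonassoc_ring)"
  unfolding associator_def by (simp add: na_simps algebra_simps)

lemma associator_left_alternative [simp]: "associator x x (y::'a::alternative_ring) = 0"
  using left_alternative unfolding associator_def .

lemma associator_right_alternative [simp]: "associator y x (x::'a::alternative_ring) = 0"
  using right_alternative unfolding associator_def .

lemma associator_swap_left: "associator x y (z::'a::alternative_ring) = - associator y x z"
  using associator_left_alternative [of "x + y" z, unfolded associator_add]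
  by (simp add: eq_neg_iff_add_eq_0 add.commute)

lemma associator_swap_right: "associator x y (z::'a::alternative_ring) = - associator x z y"
  using associator_right_alternative [of x "y + z", unfolded associator_add]
  by (simp add: eq_neg_iff_add_eq_0 add.commute)

lemma associator_cycle: "associator x y (z::'a::alternative_ring) = associator y z x"
  using associator_swap_left [of x y z] associator_swap_right [of y x z] by simp

lemma associator_swap_outer: "associator x y (z::'a::alternative_ring) = - associator z y x"
  using associator_cycle [of x y z] associator_swap_left [of y z x] by simp

lemma associator_flexible [simp]: "associator x y (x::'a::alternative_ring) = 0"
  using associator_swap_left [of x y x] by simp

lemma flexible_law: "x * (y * x) = (x * y) * (x::'a::alternative_ring)"
  using associator_flexible [of x y] unfolding associator_def by simp

lemma left_alternative_linearized:
  "e * (x * y) = (e * x) * y + (x * e) * y - x * ((e::'a::alternative_ring) * y)"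
  using associator_swap_left [of e x y] unfolding associator_def by (simp add: algebra_simps)

lemma right_alternative_linearized:
  "(x * y) * e = x * (y * e) - (x * e) * y + x * ((e::'a::alternative_ring) * y)"
  using associator_swap_right [of x y e] unfolding associator_def by (simp add: algebra_simps)

lemma associator_x_xy_y [simp]: "associator x (x * y) (y::'a::alternative_ring) = 0"
  using teichmuller_identity [of x x y y] by simp

lemma associator_x_yx_y [simp]: "associator x (y * x) (y::'a::alternative_ring) = 0"
  using associator_x_xy_y [of y x] associator_swap_outer [of x "y * x" y] by simp

lemma associator_xy_x_y [simp]: "associator (x * y) x (y::'a::alternative_ring) = 0"
  using teichmuller_identity [of x y x y] associator_swap_right [of x y "x * y"] by simp

lemma associator_yx_x_y [simp]: "associator (y * x) x (y::'a::alternative_ring) = 0"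
  using teichmuller_identity [of y x x y] associator_swap_right [of y x "x * y"] by simp

lemma associator_ab_a_skew:
  "associator (a * b) a (c::'a::alternative_ring) = - associator (a * c) a b"
  using associator_xy_x_y [of a "b + c", unfolded na_simps associator_add]
  by (simp add: eq_neg_iff_add_eq_0 add.commute)

lemma associator_ba_a_skew:
  "associator (b * a) a (c::'a::alternative_ring) = - associator (c * a) a b"
  using associator_yx_x_y [of "b + c" a, unfolded na_simps associator_add]
  by (simp add: eq_neg_iff_add_eq_0 add.commute)

lemma moufang_left: "((a * b) * a) * c = a * (b * (a * (c::'a::alternative_ring)))"
proof -
  have "((a * b) * a) * c - a * (b * (a * c)) = associator (a * b) a c + associator a b (a * c)"
    unfolding associator_def by simp
  also have "\<dots> = 0"
    using associator_ab_a_skew [of a b c] associator_cycle [of "a * c" a b] by simp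
  finally show ?thesis by simp
qed

lemma moufang_right: "c * ((a * b) * a) = ((c * a) * b) * (a::'a::alternative_ring)"
proof -
  have "((c * a) * b) * a - c * (a * (b * a)) = associator (c * a) b a + associator c a (b * a)"
    unfolding associator_def by simp
  also have "\<dots> = 0"
    using associator_ba_a_skew [of b a c] associator_swap_right [of "c * a" b a]
      associator_swap_outer [of c a "b * a"] by simp
  finally show ?thesis
    using flexible_law [of a b] by simp
qed

section \<open>Iterated commutators with a fixed element\<close>

definition ad_pow :: "'a::nonassoc_ring \<Rightarrow> nat \<Rightarrow> 'a \<Rightarrow> 'a" where
  "ad_pow e k w = foldl commutator w (replicate k e)"

text \<open>The terms of the Lie derivation identity for [x, y, e, ..., e] in which D hits one of the
  k trailing copies of e; d stands for D e.\<close>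

definition ad_pow_deriv :: "'a::nonassoc_ring \<Rightarrow> 'a \<Rightarrow> nat \<Rightarrow> 'a \<Rightarrow> 'a" where
  "ad_pow_deriv e d k w = (\<Sum>j<k. foldl commutator w ((replicate k e)[j := d]))"

lemma foldl_commutator_add:
  "foldl commutator (u + v) xs = foldl commutator u xs + foldl commutator (v::'a::nonassoc_ring) xs"
  by (induction xs arbitrary: u v) (simp_all add: commutator_add_left)

lemma foldl_commutator_zero: "foldl commutator (0::'a::nonassoc_ring) xs = 0"
  by (induction xs) simp_all

lemma foldl_commutator_minus:
  "foldl commutator (- u) xs = - foldl commutator (u::'a::nonassoc_ring) xs"
  using foldl_commutator_add [of "- u" u xs]
  by (simp add: foldl_commutator_zero eq_neg_iff_add_eq_0)

lemma ad_pow_add: "ad_pow e k (u + v) = ad_pow e k u + ad_pow e k v"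
  unfolding ad_pow_def by (rule foldl_commutator_add)

lemma ad_pow_minus: "ad_pow e k (- u) = - ad_pow e k u"
  unfolding ad_pow_def by (rule foldl_commutator_minus)

lemma ad_pow_diff: "ad_pow e k (u - v) = ad_pow e k u - ad_pow e k v"
  using ad_pow_add [of e k u "- v"] by (simp add: ad_pow_minus)

lemmas ad_pow_linear = ad_pow_add ad_pow_minus ad_pow_diff

lemma ad_pow_zero [simp]: "ad_pow e k 0 = 0"
  unfolding ad_pow_def by (rule foldl_commutator_zero)

lemma ad_pow_Suc: "ad_pow e (Suc k) w = ad_pow e k (commutator w e)"
  unfolding ad_pow_def by simp

lemma ad_pow_eq_zero_if_commute: "commutator w e = 0 \<Longrightarrow> 0 < k \<Longrightarrow> ad_pow e k w = 0"
  by (cases k) (simp_all add: ad_pow_Suc)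

lemma ad_pow_deriv_add:
  "ad_pow_deriv e d k (u + v) = ad_pow_deriv e d k u + ad_pow_deriv e d k v"
  unfolding ad_pow_deriv_def by (simp add: foldl_commutator_add sum.distrib)

lemma ad_pow_deriv_zero [simp]: "ad_pow_deriv e d k 0 = 0"
  unfolding ad_pow_deriv_def by (simp add: foldl_commutator_zero)

definition alt_sign :: "nat \<Rightarrow> 'a::ab_group_add \<Rightarrow> 'a" where
  "alt_sign k x = (if even k then x else - x)"

lemma alt_sign_alt_sign [simp]: "alt_sign k (alt_sign k x) = x"
  unfolding alt_sign_def by simp

lemma alt_sign_minus [simp]: "alt_sign k (- x) = - alt_sign k x"
  unfolding alt_sign_def by simp

lemma alt_sign_eq_zero_iff [simp]: "alt_sign k x = 0 \<longleftrightarrow> x = 0"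
  unfolding alt_sign_def by simp

section \<open>Peirce decomposition with respect to an idempotent\<close>

locale idempotent =
  fixes e :: "'a::alternative_ring"
  assumes idem: "e * e = e"
begin

lemma idem_mult_idem_mult [simp]: "e * (e * x) = e * x"
  using associator_left_alternative [of e x] idem unfolding associator_def by simp

lemma mult_idem_mult_idem [simp]: "(x * e) * e = x * e"
  using associator_right_alternative [of x e] idem unfolding associator_def by simp

lemma mem_peirce_iff:
  "x \<in> peirce e i j \<longleftrightarrow> peirce_left i e x = x \<and> peirce_right j e x = x"
proof
  assume "x \<in> peirce e i j"
  then obtain z where "x = peirce_right j e (peirce_left i e z)"
    unfolding peirce_def by blast
  then show "peirce_left i e x = x \<and> peirce_right j e x = x"
    unfolding peirce_left_def peirce_right_def
    by (simp add: na_simps flexible_law [of e] flexible_law [of e "e * z"])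
next
  assume "peirce_left i e x = x \<and> peirce_right j e x = x"
  then have "x = peirce_right j e (peirce_left i e x)"
    by simp
  then show "x \<in> peirce e i j"
    unfolding peirce_def by blast
qed

lemma peirce_11_iff: "x \<in> peirce e 1 1 \<longleftrightarrow> e * x = x \<and> x * e = x"
  and peirce_12_iff: "x \<in> peirce e 1 2 \<longleftrightarrow> e * x = x \<and> x * e = 0"
  and peirce_21_iff: "x \<in> peirce e 2 1 \<longleftrightarrow> e * x = 0 \<and> x * e = x"
  and peirce_22_iff: "x \<in> peirce e 2 2 \<longleftrightarrow> e * x = 0 \<and> x * e = 0"
  by (auto simp: mem_peirce_iff peirce_left_def peirce_right_def)

lemmas peirce_iffs = peirce_11_iff peirce_12_iff peirce_21_iff peirce_22_iff

lemma peirce_add: "x \<in> peirce e i j \<Longrightarrow> y \<in> peirce e i j \<Longrightarrow> x + y \<in> peirce e i j"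
  unfolding mem_peirce_iff peirce_left_def peirce_right_def
  by (cases "i = 1"; cases "j = 1") (simp_all add: na_simps)

lemma peirce_minus: "x \<in> peirce e i j \<Longrightarrow> - x \<in> peirce e i j"
  unfolding mem_peirce_iff peirce_left_def peirce_right_def
  by (cases "i = 1"; cases "j = 1") (simp_all add: na_simps)

lemma peirce_diff: "x \<in> peirce e i j \<Longrightarrow> y \<in> peirce e i j \<Longrightarrow> x - y \<in> peirce e i j"
  using peirce_add [of x i j "- y"] by (simp add: peirce_minus)

lemma peirce_alt_sign: "x \<in> peirce e i j \<Longrightarrow> alt_sign k x \<in> peirce e i j"
  unfolding alt_sign_def by (simp add: peirce_minus)

lemma peirce_mult_zero:
  "a \<in> peirce e 1 1 \<Longrightarrow> y \<in> peirce e 2 1 \<Longrightarrow> a * y = 0"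
  "y \<in> peirce e 2 1 \<Longrightarrow> b \<in> peirce e 2 2 \<Longrightarrow> y * b = 0"
  "x \<in> peirce e 1 2 \<Longrightarrow> a \<in> peirce e 1 1 \<Longrightarrow> x * a = 0"
  "b \<in> peirce e 2 2 \<Longrightarrow> x \<in> peirce e 1 2 \<Longrightarrow> b * x = 0"
  using moufang_left [of e a y] moufang_right [of y e b] right_alternative_linearized [of y b e]
    moufang_right [of x e a] moufang_left [of e b x] left_alternative_linearized [of e b x]
  unfolding peirce_iffs by (simp_all add: na_simps)

lemma peirce_mult:
  "a \<in> peirce e 1 1 \<Longrightarrow> x \<in> peirce e 1 2 \<Longrightarrow> a * x \<in> peirce e 1 2"
  "x \<in> peirce e 1 2 \<Longrightarrow> b \<in> peirce e 2 2 \<Longrightarrow> x * b \<in> peirce e 1 2"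
  "y \<in> peirce e 2 1 \<Longrightarrow> a \<in> peirce e 1 1 \<Longrightarrow> y * a \<in> peirce e 2 1"
  "b \<in> peirce e 2 2 \<Longrightarrow> y \<in> peirce e 2 1 \<Longrightarrow> b * y \<in> peirce e 2 1"
  "x \<in> peirce e 1 2 \<Longrightarrow> y \<in> peirce e 2 1 \<Longrightarrow> x * y \<in> peirce e 1 1"
  "y \<in> peirce e 2 1 \<Longrightarrow> x \<in> peirce e 1 2 \<Longrightarrow> y * x \<in> peirce e 2 2"
  "x \<in> peirce e 1 2 \<Longrightarrow> x' \<in> peirce e 1 2 \<Longrightarrow> x * x' \<in> peirce e 2 1"
  "y \<in> peirce e 2 1 \<Longrightarrow> y' \<in> peirce e 2 1 \<Longrightarrow> y * y' \<in> peirce e 1 2"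
  using left_alternative_linearized [of e a x] right_alternative_linearized [of a x e]
    left_alternative_linearized [of e x b] right_alternative_linearized [of x b e]
    left_alternative_linearized [of e y a] right_alternative_linearized [of y a e]
    left_alternative_linearized [of e b y] right_alternative_linearized [of b y e]
    left_alternative_linearized [of e x y] right_alternative_linearized [of x y e]
    left_alternative_linearized [of e y x] right_alternative_linearized [of y x e]
    left_alternative_linearized [of e x x'] right_alternative_linearized [of x x' e]
    left_alternative_linearized [of e y y'] right_alternative_linearized [of y y' e]
  unfolding peirce_iffs by (simp_all add: na_simps)

lemma commutator_idem_peirce:
  "x \<in> peirce e 1 2 \<Longrightarrow> commutator e x = x"
  "x \<in> peirce e 1 2 \<Longrightarrow> commutator x e = - x"
  "y \<in> peirce e 2 1 \<Longrightarrow> commutator e y = - y"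
  "y \<in> peirce e 2 1 \<Longrightarrow> commutator y e = y"
  unfolding peirce_iffs commutator_def by simp_all

lemma ad_pow_peirce_12: "x \<in> peirce e 1 2 \<Longrightarrow> ad_pow e k x = alt_sign k x"
proof (induction k)
  case 0
  then show ?case by (simp add: ad_pow_def alt_sign_def)
next
  case (Suc k)
  then show ?case
    by (simp add: ad_pow_Suc commutator_idem_peirce ad_pow_minus alt_sign_def)
qed

lemma ad_pow_peirce_21: "y \<in> peirce e 2 1 \<Longrightarrow> ad_pow e k y = y"
  by (induction k) (simp_all add: ad_pow_def commutator_idem_peirce)

lemma commutator_diagonal_idem:
  "a \<in> peirce e 1 1 \<Longrightarrow> b \<in> peirce e 2 2 \<Longrightarrow> commutator (a + b) e = 0"
  unfolding peirce_iffs commutator_def by (simp add: na_simps)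

lemma commutator_diagonal_peirce:
  assumes a: "a \<in> peirce e 1 1" and b: "b \<in> peirce e 2 2"
  shows "x \<in> peirce e 1 2 \<Longrightarrow> commutator (a + b) x \<in> peirce e 1 2"
    and "y \<in> peirce e 2 1 \<Longrightarrow> commutator (a + b) y \<in> peirce e 2 1"
proof -
  assume x: "x \<in> peirce e 1 2"
  have "commutator (a + b) x = a * x - x * b"
    using peirce_mult_zero(3) [OF x a] peirce_mult_zero(4) [OF b x]
    unfolding commutator_def by (simp add: na_simps)
  then show "commutator (a + b) x \<in> peirce e 1 2"
    using peirce_diff [OF peirce_mult(1) [OF a x] peirce_mult(2) [OF x b]] by simp
next
  assume y: "y \<in> peirce e 2 1"
  have "commutator (a + b) y = b * y - y * a"
    using peirce_mult_zero(1) [OF a y] peirce_mult_zero(2) [OF y b]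
    unfolding commutator_def by (simp add: na_simps)
  then show "commutator (a + b) y \<in> peirce e 2 1"
    using peirce_diff [OF peirce_mult(4) [OF b y] peirce_mult(3) [OF y a]] by simp
qed

lemma commutator_peirce_12_21_commute_idem:
  assumes x: "x \<in> peirce e 1 2" and y: "y \<in> peirce e 2 1"
  shows "commutator (commutator x y) e = 0"
  using commutator_diagonal_idem
      [OF peirce_mult(5) [OF x y] peirce_minus [OF peirce_mult(6) [OF y x]]]
  unfolding commutator_def by simp

lemma commutator_peirce_12_12:
  "x \<in> peirce e 1 2 \<Longrightarrow> x' \<in> peirce e 1 2 \<Longrightarrow> commutator x x' \<in> peirce e 2 1"
  unfolding commutator_def by (intro peirce_diff peirce_mult(7))

lemma commutator_peirce_21_21:
  "y \<in> peirce e 2 1 \<Longrightarrow> y' \<in> peirce e 2 1 \<Longrightarrow> commutator y y' \<in> peirce e 1 2"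
  unfolding commutator_def by (intro peirce_diff peirce_mult(8))

lemma diagonal_if_commute_idem:
  assumes "commutator z e = 0"
  obtains a b where "a \<in> peirce e 1 1" and "b \<in> peirce e 2 2" and "z = a + b"
proof
  have ze: "z * e = e * z"
    using assms unfolding commutator_def by simp
  then have eze: "e * (z * e) = z * e"
    by (simp only: ze idem_mult_idem_mult)
  show "z * e \<in> peirce e 1 1"
    unfolding peirce_iffs using eze by simp
  show "z - z * e \<in> peirce e 2 2"
    unfolding peirce_iffs using ze [symmetric] eze by (simp add: na_simps)
qed simp

lemma commutator_idem_eq_zero_if_ad_pow:
  assumes "ad_pow e k (commutator z e) = 0"
  shows "commutator z e = 0"
proof -
  define p where "p = e * z - (e * z) * e"
  define q where "q = z * e - (e * z) * e"
  have p: "p \<in> peirce e 1 2" and q: "q \<in> peirce e 2 1"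
    unfolding p_def q_def peirce_iffs
    by (simp_all add: na_simps flexible_law [of e] flexible_law [of e "e * z"])
  have "commutator z e = q - p"
    unfolding p_def q_def commutator_def by simp
  with assms have "q - alt_sign k p = 0"
    by (simp add: ad_pow_diff ad_pow_peirce_12 [OF p] ad_pow_peirce_21 [OF q])
  then have "e * (q - alt_sign k p) = 0"
    by simp
  then have "p = 0"
    using q peirce_alt_sign [OF p, of k] unfolding peirce_iffs by (simp add: na_simps)
  with \<open>q - alt_sign k p = 0\<close> \<open>commutator z e = q - p\<close> show ?thesis
    by (simp add: alt_sign_def)
qed

end

lemma mult_lie_n_derivation_ad_pow:
  assumes "mult_lie_n_derivation (Suc (Suc k)) D"
  shows "D (ad_pow e k (commutator x y)) = ad_pow e k (commutator (D x) y)
           + ad_pow e k (commutator x (D y)) + ad_pow_deriv e (D e) k (commutator x y)"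
proof -
  let ?xs = "x # y # replicate k e"
  have "D (lie_poly ?xs) = (\<Sum>i<Suc (Suc k). lie_poly (?xs[i := D (?xs ! i)]))"
    using assms unfolding mult_lie_n_derivation_def by simp
  also have "\<dots> = lie_poly (?xs[0 := D x]) + (lie_poly (?xs[1 := D y])
      + (\<Sum>j<k. lie_poly (?xs[Suc (Suc j) := D e])))"
    by (simp only: sum.lessThan_Suc_shift) simp
  also have "(\<Sum>j<k. lie_poly (?xs[Suc (Suc j) := D e]))
      = ad_pow_deriv e (D e) k (commutator x y)"
    unfolding ad_pow_deriv_def lie_poly_def by simp
  finally show ?thesis
    by (simp add: lie_poly_def ad_pow_def add.assoc)
qed

lemma mult_lie_2_derivation_imp_3:
  assumes "mult_lie_n_derivation 2 D"
  shows "mult_lie_n_derivation 3 D"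
  unfolding mult_lie_n_derivation_def
proof (intro allI impI)
  have D_commutator: "D (commutator u v) = commutator (D u) v + commutator u (D v)" for u v
    using assms [unfolded mult_lie_n_derivation_def, rule_format, of "[u, v]"]
    by (simp add: lie_poly_def numeral_2_eq_2)
  fix xs :: "'a list"
  assume "length xs = 3"
  then obtain x y z where xs: "xs = [x, y, z]"
    by (auto simp: numeral_3_eq_3 length_Suc_conv)
  show "D (lie_poly xs) = (\<Sum>i<3. lie_poly (xs[i := D (xs ! i)]))"
    by (simp add: xs lie_poly_def numeral_3_eq_3 D_commutator commutator_add_left add.assoc)
qed

section \<open>Additivity on the off-diagonal Peirce spaces\<close>

definition additivity_defect :: "('a::ab_group_add \<Rightarrow> 'a) \<Rightarrow> 'a \<Rightarrow> 'a \<Rightarrow> 'a" where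
  "additivity_defect D u v = D (u + v) - D u - D v"

locale lie_derivation_peirce = idempotent e for e :: "'a::alternative_ring" +
  fixes D :: "'a \<Rightarrow> 'a" and k :: nat
  assumes k_pos: "0 < k"
    and lie_derivation: "mult_lie_n_derivation (Suc (Suc k)) D"
    and central_12: "\<And>a11 a22. a11 \<in> peirce e 1 1 \<Longrightarrow> a22 \<in> peirce e 2 2 \<Longrightarrow>
        (\<forall>x \<in> peirce e 1 2. commutator (a11 + a22) x = 0) \<Longrightarrow> a11 + a22 \<in> center"
    and central_21: "\<And>a11 a22. a11 \<in> peirce e 1 1 \<Longrightarrow> a22 \<in> peirce e 2 2 \<Longrightarrow>
        (\<forall>x \<in> peirce e 2 1. commutator (a11 + a22) x = 0) \<Longrightarrow> a11 + a22 \<in> center"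
begin

lemmas D_ad_pow_commutator = mult_lie_n_derivation_ad_pow [OF lie_derivation, of e]

lemma D_zero [simp]: "D 0 = 0"
  using D_ad_pow_commutator [of 0 0] by simp

lemma ad_pow_commutator_additivity_defect:
  "ad_pow e k (commutator (additivity_defect D u v) w)
     = additivity_defect D (ad_pow e k (commutator u w)) (ad_pow e k (commutator v w))"
  using D_ad_pow_commutator [of "u + v" w] D_ad_pow_commutator [of u w]
    D_ad_pow_commutator [of v w]
  unfolding additivity_defect_def
  by (simp add: commutator_linear ad_pow_linear ad_pow_deriv_add)

lemma D_ad_pow_commutator_add_add:
  assumes "additivity_defect D u1 u2 \<in> center" and "additivity_defect D v1 v2 \<in> center"
  shows "D (ad_pow e k (commutator (u1 + u2) (v1 + v2)))
    = D (ad_pow e k (commutator u1 v1)) + D (ad_pow e k (commutator u1 v2))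
      + D (ad_pow e k (commutator u2 v1)) + D (ad_pow e k (commutator u2 v2))"
proof -
  have u: "D (u1 + u2) = D u1 + D u2 + additivity_defect D u1 u2"
    and v: "D (v1 + v2) = D v1 + D v2 + additivity_defect D v1 v2"
    unfolding additivity_defect_def by simp_all
  show ?thesis
    using D_ad_pow_commutator [of "u1 + u2" "v1 + v2"] D_ad_pow_commutator [of u1 v1]
      D_ad_pow_commutator [of u1 v2] D_ad_pow_commutator [of u2 v1] D_ad_pow_commutator [of u2 v2]
      center_commutator_left [OF assms(1)] center_commutator_right [OF assms(2)]
    by (simp add: u v commutator_linear ad_pow_linear ad_pow_deriv_add algebra_simps)
qed

lemma ad_pow_commutator_peirce_12_21:
  assumes "x \<in> peirce e 1 2" and "y \<in> peirce e 2 1"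
  shows "ad_pow e k (commutator x y) = 0" and "ad_pow e k (commutator y x) = 0"
  using ad_pow_eq_zero_if_commute [OF commutator_peirce_12_21_commute_idem [OF assms] k_pos]
  by (simp_all add: commutator_swap [of y x] ad_pow_minus)

lemma additivity_defect_idem_diagonal:
  obtains a b where "a \<in> peirce e 1 1" and "b \<in> peirce e 2 2"
    and "additivity_defect D e w = a + b"
proof -
  have "ad_pow e k (commutator (additivity_defect D e w) e) = 0"
    unfolding ad_pow_commutator_additivity_defect by (simp add: additivity_defect_def)
  then show thesis
    using that
    by (blast elim: diagonal_if_commute_idem dest: commutator_idem_eq_zero_if_ad_pow)
qed

lemma ad_pow_commutator_additivity_defect_idem:
  "ad_pow e k (commutator w v) = 0
    \<Longrightarrow> ad_pow e k (commutator (additivity_defect D e w) v) = 0"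
  unfolding ad_pow_commutator_additivity_defect by (simp add: additivity_defect_def)

lemma additivity_defect_idem_peirce_12_central:
  assumes x: "x \<in> peirce e 1 2"
  shows "additivity_defect D e x \<in> center"
proof -
  obtain a b where a: "a \<in> peirce e 1 1" and b: "b \<in> peirce e 2 2"
    and defect: "additivity_defect D e x = a + b"
    by (rule additivity_defect_idem_diagonal)
  have "commutator (a + b) y = 0" if y: "y \<in> peirce e 2 1" for y
  proof -
    have "ad_pow e k (commutator (a + b) y) = 0"
      using ad_pow_commutator_additivity_defect_idem
        [OF ad_pow_commutator_peirce_12_21(1) [OF x y]]
      by (simp add: defect)
    then show ?thesis
      by (simp add: ad_pow_peirce_21 [OF commutator_diagonal_peirce(2) [OF a b y]])
  qed
  then show ?thesis
    using central_21 [OF a b] by (simp add: defect)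
qed

lemma additivity_defect_idem_peirce_21_central:
  assumes y: "y \<in> peirce e 2 1"
  shows "additivity_defect D e y \<in> center"
proof -
  obtain a b where a: "a \<in> peirce e 1 1" and b: "b \<in> peirce e 2 2"
    and defect: "additivity_defect D e y = a + b"
    by (rule additivity_defect_idem_diagonal)
  have "commutator (a + b) x = 0" if x: "x \<in> peirce e 1 2" for x
  proof -
    have "ad_pow e k (commutator (a + b) x) = 0"
      using ad_pow_commutator_additivity_defect_idem
        [OF ad_pow_commutator_peirce_12_21(2) [OF x y]]
      by (simp add: defect)
    then show ?thesis
      by (simp add: ad_pow_peirce_12 [OF commutator_diagonal_peirce(1) [OF a b x]])
  qed
  then show ?thesis
    using central_12 [OF a b] by (simp add: defect)
qed

lemma D_ad_pow_commutator_idem_add: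
  assumes "u \<in> peirce e 1 2 \<union> peirce e 2 1" and "v \<in> peirce e 1 2 \<union> peirce e 2 1"
  shows "D (ad_pow e k (commutator (e + u) (e + v)))
    = D (ad_pow e k (commutator e v)) + D (ad_pow e k (commutator u e))
      + D (ad_pow e k (commutator u v))"
proof -
  have "additivity_defect D e u \<in> center" and "additivity_defect D e v \<in> center"
    using assms additivity_defect_idem_peirce_12_central additivity_defect_idem_peirce_21_central
    by blast+
  then show ?thesis
    by (simp add: D_ad_pow_commutator_add_add)
qed

lemma additive_peirce_12_21:
  assumes x: "x \<in> peirce e 1 2" and y: "y \<in> peirce e 2 1"
  shows "D (x + y) = D x + D y"
proof -
  define x' where "x' = alt_sign k x"
  have x': "x' \<in> peirce e 1 2"
    unfolding x'_def using x by (rule peirce_alt_sign)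
  have "ad_pow e k (commutator e x') = x"
    using commutator_idem_peirce(1) [OF x'] ad_pow_peirce_12 [OF x'] by (simp add: x'_def)
  moreover have "ad_pow e k (commutator y e) = y"
    using commutator_idem_peirce(4) [OF y] ad_pow_peirce_21 [OF y] by simp
  moreover have "ad_pow e k (commutator y x') = 0"
    using x' y by (rule ad_pow_commutator_peirce_12_21(2))
  ultimately show ?thesis
    using D_ad_pow_commutator_idem_add [of y x'] x' y
    by (simp add: commutator_add_left commutator_add_right ad_pow_add ac_simps)
qed

lemma additive_peirce_12:
  assumes a: "a \<in> peirce e 1 2" and b: "b \<in> peirce e 1 2"
  shows "D (a + b) = D a + D b"
proof -
  define a' where "a' = - alt_sign k a"
  define b' where "b' = alt_sign k b"
  have a': "a' \<in> peirce e 1 2" and b': "b' \<in> peirce e 1 2"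
    unfolding a'_def b'_def using a b by (simp_all add: peirce_minus peirce_alt_sign)
  define c where "c = commutator a' b'"
  have c: "c \<in> peirce e 2 1"
    unfolding c_def using a' b' by (rule commutator_peirce_12_12)
  have "ad_pow e k (commutator e b') = b"
    using commutator_idem_peirce(1) [OF b'] ad_pow_peirce_12 [OF b'] by (simp add: b'_def)
  moreover have "ad_pow e k (commutator a' e) = a"
    using commutator_idem_peirce(2) [OF a'] ad_pow_peirce_12 [OF a']
    by (simp add: ad_pow_minus a'_def)
  moreover have "ad_pow e k (commutator a' b') = c"
    using ad_pow_peirce_21 [OF c] by (simp add: c_def)
  ultimately have "D (a + b + c) = D a + D b + D c"
    using D_ad_pow_commutator_idem_add [of a' b'] a' b'
    by (simp add: commutator_add_left commutator_add_right ad_pow_add ac_simps)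
  moreover have "D (a + b + c) = D (a + b) + D c"
    using additive_peirce_12_21 [OF peirce_add [OF a b] c] .
  ultimately show ?thesis
    by simp
qed

lemma additive_peirce_21:
  assumes y: "y \<in> peirce e 2 1" and z: "z \<in> peirce e 2 1"
  shows "D (y + z) = D y + D z"
proof -
  define z' where "z' = - z"
  have z': "z' \<in> peirce e 2 1"
    unfolding z'_def using z by (rule peirce_minus)
  define c where "c = commutator y z'"
  have c: "c \<in> peirce e 1 2"
    unfolding c_def using y z' by (rule commutator_peirce_21_21)
  have "ad_pow e k (commutator e z') = z"
    using commutator_idem_peirce(3) [OF z'] ad_pow_peirce_21 [OF z]
    by (simp add: ad_pow_minus z'_def)
  moreover have "ad_pow e k (commutator y e) = y"
    using commutator_idem_peirce(4) [OF y] ad_pow_peirce_21 [OF y] by simp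
  moreover have "ad_pow e k (commutator y z') = alt_sign k c"
    using ad_pow_peirce_12 [OF c] by (simp add: c_def)
  ultimately have "D (y + z + alt_sign k c) = D y + D z + D (alt_sign k c)"
    using D_ad_pow_commutator_idem_add [of y z'] y z'
    by (simp add: commutator_add_left commutator_add_right ad_pow_add ac_simps)
  moreover have "D (alt_sign k c + (y + z)) = D (alt_sign k c) + D (y + z)"
    using additive_peirce_12_21 [OF peirce_alt_sign [OF c] peirce_add [OF y z]] .
  ultimately show ?thesis
    by (simp add: ac_simps)
qed

end

theorem lemma2p4:
  fixes e1 :: "'a::alternative_ring" and D :: "'a \<Rightarrow> 'a"
  assumes idem: "nontrivial_idempotent e1"
    and cond_i: "\<And>a11 a22. a11 \<in> peirce e1 1 1 \<Longrightarrow> a22 \<in> peirce e1 2 2 \<Longrightarrow>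
        (\<forall>x \<in> peirce e1 1 2. commutator (a11 + a22) x = 0) \<Longrightarrow> a11 + a22 \<in> center"
    and cond_ii: "\<And>a11 a22. a11 \<in> peirce e1 1 1 \<Longrightarrow> a22 \<in> peirce e1 2 2 \<Longrightarrow>
        (\<forall>x \<in> peirce e1 2 1. commutator (a11 + a22) x = 0) \<Longrightarrow> a11 + a22 \<in> center"
    and D: "mult_lie_type_derivation D"
  shows "\<forall>i \<in> {1,2}. \<forall>j \<in> {1,2}. i \<noteq> j \<longrightarrow>
           (\<forall>a \<in> peirce e1 i j. \<forall>b \<in> peirce e1 i j. D (a + b) = D a + D b)"
proof -
  obtain n where n: "n \<ge> 2" and D_n: "mult_lie_n_derivation n D"
    using D unfolding mult_lie_type_derivation_def by blast
  have "\<exists>k > 0. mult_lie_n_derivation (Suc (Suc k)) D"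
  proof (cases "n = 2")
    case True
    then show ?thesis
      using mult_lie_2_derivation_imp_3 [of D] D_n
      by (intro exI [of _ 1]) (simp add: numeral_3_eq_3)
  next
    case False
    with n have "n = Suc (Suc (n - 2))" and "0 < n - 2"
      by simp_all
    then show ?thesis
      using D_n by metis
  qed
  then obtain k where "0 < k" and "mult_lie_n_derivation (Suc (Suc k)) D"
    by blast
  moreover have "e1 * e1 = e1"
    using idem unfolding nontrivial_idempotent_def by blast
  ultimately interpret lie_derivation_peirce e1 D k
    using cond_i cond_ii by unfold_locales
  show ?thesis
    using additive_peirce_12 additive_peirce_21 by auto
qed

end
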